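(* Let $\mathfrak t^*$ be the dual of the Lie algebra of a compact torus $T$, with weight lattice $T^*\subset \mathfrak t^*$. Let $f,g$ be measures on $\mathfrak t^*$, each a finite linear combination of cone terms, and suppose $f$ and $g$ are Fourier equivalent. If there is a pointy (i.e. proper, containing no line) cone $P$ such that $f$ and $g$ are both supported within $P$, then $f=g$.
   Context: For $\mu\in T^*$ and a finite multiset $\{\lambda\}$ of weights in $T^*$ lying in an open half-space, $\mathrm{cone}(\mu,\{\lambda\})$ denotes the pushforward of Lebesgue measure on $\mathbb R_{\ge 0}^{\{\lambda\}}$ under the map $(x_\lambda)\mapsto \mu+\sum_\lambda x_\lambda\lambda$; a cone term is any scalar multiple of such a measure. Two cone terms $C\cdot\mathrm{cone}(\mu,\{\lambda\})$ and $D\cdot\mathrm{cone}(\mu',\{\lambda'\})$ are Fourier equivalent if $\mu=\mu'$, the multisets $\{\lambda\}$ and $\{\lambda'\}$ agree after negating exactly $k$ of the weights, and $C=(-1)^kD$. Two linear combinations of cone terms are Fourier equivalent if one is obtained from the other by replacing terms by Fourier equivalent terms. *)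

theory Defs
  imports "HOL-Analysis.Analysis"
begin

text \<open>The dual Lie algebra t* of a compact torus of rank n is modelled as real^'n,
  with weight lattice T* the integer points.\<close>

definition weight_lattice :: "(real^'n) set" where
  "weight_lattice = {v. \<forall>i. v $ i \<in> \<int>}"

text \<open>Finite multisets of weights are represented by lists (order irrelevant).\<close>

definition in_open_halfspace :: "(real^'n) list \<Rightarrow> bool" where
  "in_open_halfspace ls \<longleftrightarrow> (\<exists>\<xi>. \<forall>l \<in> set ls. \<xi> \<bullet> l > 0)"

definition cone_measure :: "real^'n \<Rightarrow> (real^'n) list \<Rightarrow> (real^'n) measure" where
  "cone_measure \<mu> ls =
     distr (density (PiM {..<length ls} (\<lambda>_. lborel))
                    (indicator {x. \<forall>i<length ls. 0 \<le> x i}))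
           borel (\<lambda>x. \<mu> + (\<Sum>i<length ls. x i *\<^sub>R ls ! i))"

text \<open>A cone term C * cone(mu, ls) is a triple (C, mu, ls).\<close>


definition valid_cone_term :: "(real \<times> (real^'n) \<times> (real^'n) list) \<Rightarrow> bool" where
  "valid_cone_term t = (case t of (C, \<mu>, ls) \<Rightarrow>
      \<mu> \<in> weight_lattice \<and> set ls \<subseteq> weight_lattice \<and> in_open_halfspace ls)"

text \<open>Value of a cone term / a finite linear combination of cone terms on a set
  (as a signed Radon measure these are determined by bounded Borel sets,
  on which all the cone measures are finite).\<close>

definition cone_term_val :: "(real \<times> (real^'n) \<times> (real^'n) list) \<Rightarrow> (real^'n) set \<Rightarrow> real" where
  "cone_term_val t A = (case t of (C, \<mu>, ls) \<Rightarrow> C * measure (cone_measure \<mu> ls) A)"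

definition lincomb_val :: "(real \<times> (real^'n) \<times> (real^'n) list) list \<Rightarrow> (real^'n) set \<Rightarrow> real" where
  "lincomb_val ts A = (\<Sum>t\<leftarrow>ts. cone_term_val t A)"

definition lincomb_support :: "(real \<times> (real^'n) \<times> (real^'n) list) list \<Rightarrow> (real^'n) set" where
  "lincomb_support ts =
     {x. \<forall>e>0. \<exists>A \<in> sets borel. A \<subseteq> ball x e \<and> lincomb_val ts A \<noteq> 0}"

definition fourier_equiv_term :: "(real \<times> (real^'n) \<times> (real^'n) list) \<Rightarrow> (real \<times> (real^'n) \<times> (real^'n) list) \<Rightarrow> bool" where
  "fourier_equiv_term t t' = (case t of (C, \<mu>, ls) \<Rightarrow> case t' of (D, \<mu>', ls') \<Rightarrow>
      \<mu> = \<mu>' \<and>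
      (\<exists>flip :: bool list. length flip = length ls' \<and>
         mset ls = mset (map2 (\<lambda>b l. if b then - l else l) flip ls') \<and>
         C = (-1) ^ (length (filter id flip)) * D))"

definition fourier_equiv :: "(real \<times> (real^'n) \<times> (real^'n) list) list \<Rightarrow> (real \<times> (real^'n) \<times> (real^'n) list) list \<Rightarrow> bool" where
  "fourier_equiv fs gs \<longleftrightarrow> list_all2 fourier_equiv_term fs gs"

definition pointy_cone :: "(real^'n) set \<Rightarrow> bool" where
  "pointy_cone P \<longleftrightarrow> convex_cone P \<and> closed P \<and> (\<forall>x. x \<in> P \<and> - x \<in> P \<longrightarrow> x = 0)"

end

theory Submission
  imports Defs
begin

text \<open>Let \<open>h = f - g\<close> and write \<open>\<Delta>\<^sub>w\<close> for \<open>1\<close> minus translation by \<open>w\<close>. Applying \<open>\<Delta>\<^sub>v\<close> for all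
  weights \<open>v\<close> of a cone term turns \<open>cone(\<mu>, v)\<close> into the uniform measure on the parallelepiped
  \<open>\<mu> + \<Sum>\<^sub>j [0,1] v\<^sub>j\<close>, and negating one of the weights only changes the sign of the result.
  Hence the product \<open>D\<close> of the \<open>\<Delta>\<^sub>w\<close> over all weights \<open>w\<close> of \<open>g\<close> annihilates the difference
  of each pair of corresponding Fourier equivalent terms, and so \<open>D h = 0\<close>. On the other hand \<open>h\<close> vanishes far from
  \<open>P\<close>, and each \<open>\<Delta>\<^sub>w\<close> preserves this. If \<open>\<Delta>\<^sub>w \<psi> = 0\<close> then \<open>\<psi>\<close> is invariant under
  translation by \<open>w \<noteq> 0\<close>; as one of \<open>w\<close>, \<open>-w\<close> points out of the pointy cone \<open>P\<close>, any bounded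
  set can be translated arbitrarily far from \<open>P\<close> without changing \<open>\<psi>\<close>, so \<open>\<psi> = 0\<close>.
  Removing the factors of \<open>D\<close> one at a time gives \<open>h = 0\<close>.\<close>

section \<open>Difference operators\<close>

definition shift :: "'a::ab_group_add \<Rightarrow> 'a set \<Rightarrow> 'a set" where
  "shift v A = {x. x + v \<in> A}"

lemma shift_0 [simp]: "shift 0 A = A"
  by (simp add: shift_def)

lemma shift_shift [simp]: "shift u (shift v A) = shift (u + v) A"
  by (auto simp: shift_def algebra_simps)

lemma bounded_shift: "bounded A \<Longrightarrow> bounded (shift v (A::'a::real_normed_vector set))"
proof -
  assume "bounded A"
  moreover have "shift v A = (\<lambda>x. x - v) ` A"
    by (force simp: shift_def image_iff intro: exI[of _ "_ + v"])
  ultimately show ?thesis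
    by (simp add: bounded_translation_minus)
qed

lemma sets_borel_shift: "A \<in> sets borel \<Longrightarrow> shift v (A::'a::euclidean_space set) \<in> sets borel"
proof -
  assume "A \<in> sets borel"
  have "shift v A = (\<lambda>x. x + v) -` A \<inter> space borel"
    by (auto simp: shift_def)
  also have "\<dots> \<in> sets borel"
    using \<open>A \<in> sets borel\<close> by measurable
  finally show ?thesis .
qed

text \<open>If \<open>\<phi>\<close> is (the value on sets of) a measure, then \<open>\<phi> (shift v A)\<close> is its translate by \<open>v\<close>
  evaluated on \<open>A\<close>, and \<open>diff_op I w\<close> is the product over \<open>i \<in> I\<close> of the operators
  \<open>1 - (translation by w i)\<close>.\<close>

definition diff_op :: "'i set \<Rightarrow> ('i \<Rightarrow> 'a::ab_group_add) \<Rightarrow> ('a set \<Rightarrow> real) \<Rightarrow> 'a set \<Rightarrow> real" where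
  "diff_op I w \<phi> A = (\<Sum>S\<in>Pow I. (-1) ^ card S * \<phi> (shift (\<Sum>j\<in>S. w j) A))"

lemma diff_op_empty [simp]: "diff_op {} w \<phi> = \<phi>"
  by (simp add: diff_op_def fun_eq_iff)

lemma diff_op_insert:
  assumes "finite I" "i \<notin> I"
  shows "diff_op (insert i I) w \<phi> A = diff_op I w \<phi> A - diff_op I w \<phi> (shift (w i) A)"
proof -
  let ?t = "\<lambda>S. (-1) ^ card S * \<phi> (shift (\<Sum>j\<in>S. w j) A)"
  have "diff_op (insert i I) w \<phi> A = sum ?t (Pow I) + sum ?t (insert i ` Pow I)"
    unfolding diff_op_def Pow_insert using assms by (intro sum.union_disjoint) auto
  also have "sum ?t (insert i ` Pow I) = sum (?t \<circ> insert i) (Pow I)"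
    using assms by (intro sum.reindex) (auto simp: inj_on_def)
  also have "\<dots> = - diff_op I w \<phi> (shift (w i) A)"
    unfolding diff_op_def sum_negf[symmetric]
  proof (intro sum.cong refl)
    fix S assume "S \<in> Pow I"
    with assms have "finite S" "i \<notin> S"
      by (auto intro: finite_subset)
    then show "(?t \<circ> insert i) S = - ((-1) ^ card S * \<phi> (shift (\<Sum>j\<in>S. w j) (shift (w i) A)))"
      by (simp add: add.commute)
  qed
  finally show ?thesis
    by (simp add: diff_op_def)
qed

lemma diff_op_Un:
  assumes "finite I" "finite J" "I \<inter> J = {}"
  shows "diff_op (I \<union> J) w \<phi> = diff_op I w (diff_op J w \<phi>)"
proof
  fix A
  show "diff_op (I \<union> J) w \<phi> A = diff_op I w (diff_op J w \<phi>) A"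
    using assms
  proof (induction I arbitrary: A rule: finite_induct)
    case (insert i I)
    then show ?case
      by (simp add: diff_op_insert)
  qed simp
qed

lemma diff_op_sum: "diff_op I w (\<lambda>A. \<Sum>t\<in>T. \<phi> t A) A = (\<Sum>t\<in>T. diff_op I w (\<phi> t) A)"
  unfolding diff_op_def by (simp add: sum_distrib_left sum.swap[of _ T])

lemma diff_op_lincomb:
  "diff_op I w (\<lambda>A. a * \<phi> A - b * \<psi> A) B = a * diff_op I w \<phi> B - b * diff_op I w \<psi> B"
  unfolding diff_op_def by (simp add: sum_subtractf sum_distrib_left algebra_simps)

lemma diff_op_reindex:
  assumes "inj_on f I"
  shows "diff_op (f ` I) w \<phi> = diff_op I (w \<circ> f) \<phi>"
proof
  fix A
  have "inj_on f S" if "S \<in> Pow I" for S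
    using assms that inj_on_subset by blast
  then show "diff_op (f ` I) w \<phi> A = diff_op I (w \<circ> f) \<phi> A"
    unfolding diff_op_def image_Pow_surj[of f I, OF refl, symmetric] using assms
    by (simp add: sum.reindex inj_on_image_Pow card_image)
qed

section \<open>Set functions vanishing far from a pointy cone\<close>

definition null_on_bounded :: "('a::euclidean_space set \<Rightarrow> real) \<Rightarrow> bool" where
  "null_on_bounded \<phi> \<longleftrightarrow> (\<forall>A \<in> sets borel. bounded A \<longrightarrow> \<phi> A = 0)"

definition null_far_from :: "'a::euclidean_space set \<Rightarrow> real \<Rightarrow> ('a set \<Rightarrow> real) \<Rightarrow> bool" where
  "null_far_from P r \<phi> \<longleftrightarrow>
     (\<forall>A \<in> sets borel. bounded A \<longrightarrow> (\<forall>a\<in>A. r \<le> infdist a P) \<longrightarrow> \<phi> A = 0)"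

lemma null_on_bounded_diff_op:
  assumes "null_on_bounded \<phi>"
  shows "null_on_bounded (diff_op I w \<phi>)"
  using assms unfolding null_on_bounded_def diff_op_def
  by (simp add: sets_borel_shift bounded_shift)

lemma null_on_bounded_diff_op_superset:
  assumes "null_on_bounded (diff_op I w \<phi>)" "I \<subseteq> J" "finite J"
  shows "null_on_bounded (diff_op J w \<phi>)"
proof -
  have "finite I"
    using assms(2,3) by (rule finite_subset)
  then have "diff_op J w \<phi> = diff_op (J - I) w (diff_op I w \<phi>)"
    using diff_op_Un[of "J - I" I w \<phi>] assms(2,3) by (auto simp: Un_absorb2)
  with assms(1) show ?thesis
    by (simp add: null_on_bounded_diff_op)
qed

lemma null_far_from_diff_op:
  assumes "finite I" "null_far_from P r \<phi>"
  shows "null_far_from P (r + (\<Sum>j\<in>I. norm (w j))) (diff_op I w \<phi>)"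
  unfolding null_far_from_def
proof (intro ballI impI)
  fix A assume A: "A \<in> sets borel" "bounded A"
    and far: "\<forall>a\<in>A. r + (\<Sum>j\<in>I. norm (w j)) \<le> infdist a P"
  have "\<phi> (shift (sum w S) A) = 0" if S: "S \<subseteq> I" for S
  proof -
    have "r \<le> infdist x P" if "x \<in> shift (sum w S) A" for x
    proof -
      have "norm (sum w S) \<le> (\<Sum>j\<in>I. norm (w j))"
        using norm_sum[of w S] sum_mono2[OF assms(1) S, of "\<lambda>j. norm (w j)"] by simp
      moreover have "infdist (x + sum w S) P \<le> infdist x P + norm (sum w S)"
        using infdist_triangle[of "x + sum w S" P x] by (simp add: dist_norm)
      moreover have "r + (\<Sum>j\<in>I. norm (w j)) \<le> infdist (x + sum w S) P"
        using far that by (simp add: shift_def)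
      ultimately show ?thesis
        by linarith
    qed
    with assms(2) A show ?thesis
      unfolding null_far_from_def by (simp add: sets_borel_shift bounded_shift)
  qed
  then show "diff_op I w \<phi> A = 0"
    unfolding diff_op_def by (intro sum.neutral) simp
qed

lemma infdist_scaleR_convex_cone:
  fixes y :: "'a::real_normed_vector"
  assumes "convex_cone P" "0 \<le> c"
  shows "c * infdist y P \<le> infdist (c *\<^sub>R y) P"
proof (cases "c = 0")
  case False
  with assms(2) have c: "0 < c" by simp
  have ne: "P \<noteq> {}"
    using assms(1) by (simp add: convex_cone_def)
  show ?thesis
    unfolding infdist_notempty[OF ne]
  proof (rule cINF_greatest[OF ne])
    fix p assume "p \<in> P"
    with assms(1) c have "(1/c) *\<^sub>R p \<in> P"
      by (simp add: convex_cone_iff)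
    then have "c * infdist y P \<le> c * dist y ((1/c) *\<^sub>R p)"
      using c by (simp add: infdist_le)
    also have "\<dots> = norm (c *\<^sub>R (y - (1/c) *\<^sub>R p))"
      using c by (simp add: dist_norm)
    also have "\<dots> = dist (c *\<^sub>R y) p"
      using c by (simp add: dist_norm scaleR_right_diff_distrib)
    finally show "c * (INF a\<in>P. dist y a) \<le> dist (c *\<^sub>R y) p"
      unfolding infdist_notempty[OF ne] .
  qed
qed (simp add: infdist_nonneg)

lemma null_on_bounded_shift_invariant:
  fixes P :: "'a::euclidean_space set"
  assumes "convex_cone P" "closed P" "- u \<notin> P"
    and far: "null_far_from P r \<psi>"
    and inv: "\<forall>B \<in> sets borel. bounded B \<longrightarrow> \<psi> (shift u B) = \<psi> B"
  shows "null_on_bounded \<psi>"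
  unfolding null_on_bounded_def
proof (intro ballI impI)
  fix A :: "'a set" assume A: "A \<in> sets borel" "bounded A"
  have iterate: "\<psi> (shift (real n *\<^sub>R u) A) = \<psi> A" for n :: nat
  proof (induction n)
    case (Suc n)
    have "\<psi> (shift u (shift (real n *\<^sub>R u) A)) = \<psi> (shift (real n *\<^sub>R u) A)"
      using inv A by (simp del: shift_shift add: sets_borel_shift bounded_shift)
    with Suc show ?case
      by (simp add: algebra_simps)
  qed simp
  obtain M where M: "\<forall>a\<in>A. norm a \<le> M"
    using A(2) bounded_iff by blast
  have "P \<noteq> {}"
    using \<open>convex_cone P\<close> by (simp add: convex_cone_def)
  with \<open>closed P\<close> \<open>- u \<notin> P\<close> have "0 < infdist (- u) P"
    by (intro infdist_pos_not_in_closed)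
  then obtain n :: nat where n: "r + M < real n * infdist (- u) P"
    using reals_Archimedean3 by blast
  have "r \<le> infdist x P" if "x \<in> shift (real n *\<^sub>R u) A" for x
  proof -
    have "norm (x + real n *\<^sub>R u) \<le> M"
      using M that by (simp add: shift_def)
    moreover have "infdist (real n *\<^sub>R (- u)) P \<le> infdist x P + norm (x + real n *\<^sub>R u)"
      using infdist_triangle[of "real n *\<^sub>R (- u)" P x]
      by (simp add: dist_norm norm_minus_commute add.commute)
    moreover have "real n * infdist (- u) P \<le> infdist (real n *\<^sub>R (- u)) P"
      using \<open>convex_cone P\<close> by (rule infdist_scaleR_convex_cone) simp
    ultimately show ?thesis
      using n by linarith
  qed
  then have "\<psi> (shift (real n *\<^sub>R u) A) = 0"
    using far A unfolding null_far_from_def by (simp add: sets_borel_shift bounded_shift)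
  then show "\<psi> A = 0"
    by (simp add: iterate)
qed

lemma null_on_bounded_shift_invariant_pointy:
  fixes P :: "(real^'n) set"
  assumes "pointy_cone P" "v \<noteq> 0" "null_far_from P r \<psi>"
    and inv: "\<forall>B \<in> sets borel. bounded B \<longrightarrow> \<psi> (shift v B) = \<psi> B"
  shows "null_on_bounded \<psi>"
proof (cases "- v \<in> P")
  case True
  with assms(1,2) have "- (- v) \<notin> P"
    unfolding pointy_cone_def by auto
  moreover have "\<psi> (shift (- v) B) = \<psi> B" if "B \<in> sets borel" "bounded B" for B
  proof -
    have "\<psi> (shift v (shift (- v) B)) = \<psi> (shift (- v) B)"
      using inv that by (simp del: shift_shift add: sets_borel_shift bounded_shift)
    then show ?thesis
      by simp
  qed
  ultimately show ?thesis
    using assms(1,3) null_on_bounded_shift_invariant unfolding pointy_cone_def by blast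
next
  case False
  then show ?thesis
    using assms null_on_bounded_shift_invariant unfolding pointy_cone_def by blast
qed

lemma null_on_bounded_of_diff_op:
  fixes P :: "(real^'n) set"
  assumes "pointy_cone P" "finite I" "\<forall>i\<in>I. w i \<noteq> 0"
    and "null_far_from P r \<phi>" "null_on_bounded (diff_op I w \<phi>)"
  shows "null_on_bounded \<phi>"
  using assms(2-5)
proof (induction I arbitrary: r \<phi> rule: finite_induct)
  case (insert i I)
  have "null_far_from P (r + (\<Sum>j\<in>I. norm (w j))) (diff_op I w \<phi>)"
    using insert.hyps(1) insert.prems(2) by (rule null_far_from_diff_op)
  moreover have "\<forall>B \<in> sets borel. bounded B \<longrightarrow> diff_op I w \<phi> (shift (w i) B) = diff_op I w \<phi> B"
    using insert.prems(3) insert.hyps by (simp add: null_on_bounded_def diff_op_insert)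
  ultimately have "null_on_bounded (diff_op I w \<phi>)"
    using assms(1) insert.prems(1) by (intro null_on_bounded_shift_invariant_pointy) auto
  then show ?case
    using insert by blast
qed (simp add: null_on_bounded_def)

section \<open>Cone measures\<close>

abbreviation lborel_pi :: "nat \<Rightarrow> (nat \<Rightarrow> real) measure" where
  "lborel_pi k \<equiv> PiM {..<k} (\<lambda>_. lborel)"

interpretation lborel_pi: product_sigma_finite "\<lambda>_::nat. lborel :: real measure"
  by unfold_locales

definition cone_map :: "'a::real_vector \<Rightarrow> 'a list \<Rightarrow> (nat \<Rightarrow> real) \<Rightarrow> 'a" where
  "cone_map \<mu> ls x = \<mu> + (\<Sum>i<length ls. x i *\<^sub>R ls ! i)"

lemma cone_map_measurable [measurable]:
  "cone_map \<mu> ls \<in> borel_measurable (lborel_pi (length (ls :: 'a::euclidean_space list)))"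
  unfolding cone_map_def by measurable

lemma cone_integrand_measurable:
  assumes "X \<in> sets borel"
  shows "(\<lambda>x. indicator {x. \<forall>i<length ls. 0 \<le> x i} x * indicator X (cone_map \<mu> ls x) :: ennreal)
    \<in> borel_measurable (lborel_pi (length (ls :: (real^'n) list)))"
  using assms by measurable

lemma emeasure_cone_measure:
  assumes "X \<in> sets borel"
  shows "emeasure (cone_measure \<mu> ls) X =
    (\<integral>\<^sup>+x. indicator {x. \<forall>i<length ls. 0 \<le> x i} x * indicator X (cone_map \<mu> ls x)
       \<partial>lborel_pi (length ls))"
proof -
  let ?M = "lborel_pi (length ls)"
  let ?f = "indicator {x. \<forall>i<length ls. 0 \<le> x i} :: _ \<Rightarrow> ennreal"
  have "emeasure (cone_measure \<mu> ls) X = emeasure (density ?M ?f) (cone_map \<mu> ls -` X \<inter> space ?M)"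
    unfolding cone_measure_def cone_map_def[symmetric] using assms by (subst emeasure_distr) auto
  also have "\<dots> = (\<integral>\<^sup>+x. ?f x * indicator (cone_map \<mu> ls -` X \<inter> space ?M) x \<partial>?M)"
    using assms by (subst emeasure_density) auto
  also have "\<dots> = (\<integral>\<^sup>+x. ?f x * indicator X (cone_map \<mu> ls x) \<partial>?M)"
    by (intro nn_integral_cong) (auto simp: indicator_def)
  finally show ?thesis .
qed

lemma cone_map_weight_bound:
  fixes \<xi> :: "'a::real_inner"
  assumes "\<forall>l\<in>set ls. 0 < \<xi> \<bullet> l" "\<forall>i<length ls. 0 \<le> x i" "j < length ls"
  shows "x j * (\<xi> \<bullet> ls ! j) \<le> norm \<xi> * norm (cone_map \<mu> ls x) - \<xi> \<bullet> \<mu>"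
proof -
  have "0 \<le> x i * (\<xi> \<bullet> ls ! i)" if "i < length ls" for i
    using assms(1,2) nth_mem[OF that] that by (simp add: less_imp_le)
  then have "x j * (\<xi> \<bullet> ls ! j) \<le> (\<Sum>i<length ls. x i * (\<xi> \<bullet> ls ! i))"
    using assms(3) by (intro member_le_sum) auto
  also have "\<dots> = \<xi> \<bullet> cone_map \<mu> ls x - \<xi> \<bullet> \<mu>"
    by (simp add: cone_map_def inner_add_right inner_sum_right)
  also have "\<xi> \<bullet> cone_map \<mu> ls x \<le> norm \<xi> * norm (cone_map \<mu> ls x)"
    by (rule norm_cauchy_schwarz)
  finally show ?thesis
    by simp
qed

lemma emeasure_cone_measure_finite:
  assumes "in_open_halfspace ls" "X \<in> sets borel" "bounded X"
  shows "emeasure (cone_measure \<mu> ls) X < \<infinity>"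
proof -
  let ?k = "length ls"
  obtain \<xi> where \<xi>: "\<forall>l\<in>set ls. 0 < \<xi> \<bullet> l"
    using assms(1) unfolding in_open_halfspace_def by blast
  obtain R where R: "\<forall>x\<in>X. norm x \<le> R"
    using assms(3) unfolding bounded_iff by blast
  define m where "m = Min (insert 1 ((\<lambda>l. \<xi> \<bullet> l) ` set ls))"
  have "0 < m"
    unfolding m_def using \<xi> by (subst Min_gr_iff) auto
  define c where "c = (norm \<xi> * R - \<xi> \<bullet> \<mu>) / m"
  have box: "x \<in> PiE {..<?k} (\<lambda>_. {0..c})"
    if x: "x \<in> space (lborel_pi ?k)" "\<forall>i<?k. 0 \<le> x i" "cone_map \<mu> ls x \<in> X" for x
  proof -
    have "x j \<le> c" if j: "j < ?k" for j
    proof -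
      have "x j * m \<le> x j * (\<xi> \<bullet> ls ! j)"
        unfolding m_def using j x(2) by (intro mult_left_mono Min_le) auto
      also have "\<dots> \<le> norm \<xi> * norm (cone_map \<mu> ls x) - \<xi> \<bullet> \<mu>"
        using \<xi> x(2) j by (rule cone_map_weight_bound)
      also have "\<dots> \<le> norm \<xi> * R - \<xi> \<bullet> \<mu>"
        using R x(3) by (simp add: mult_left_mono)
      finally show ?thesis
        unfolding c_def using \<open>0 < m\<close> by (simp add: pos_le_divide_eq)
    qed
    with x(1,2) show ?thesis
      by (auto simp: space_PiM PiE_iff)
  qed
  have "emeasure (cone_measure \<mu> ls) X \<le> (\<integral>\<^sup>+x. indicator (PiE {..<?k} (\<lambda>_. {0..c})) x \<partial>lborel_pi ?k)"
    unfolding emeasure_cone_measure[OF assms(2)]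
    by (intro nn_integral_mono) (auto simp: indicator_def dest: box)
  also have "\<dots> = (\<Prod>i<?k. emeasure lborel {0..c})"
    by (simp add: lborel_pi.emeasure_PiM sets_PiM_I_finite)
  also have "\<dots> < \<infinity>"
    by (simp add: emeasure_lborel_Icc_eq ennreal_power less_top[symmetric])
  finally show ?thesis .
qed

lemma emeasure_lborel_vimage_unimodular_affine:
  fixes X :: "real set"
  assumes "\<bar>a\<bar> = 1" "X \<in> sets borel"
  shows "emeasure lborel {t. a * t + b \<in> X} = emeasure lborel X"
proof -
  have "lborel = density (distr lborel borel (\<lambda>t. b + a * t)) (\<lambda>_. ennreal \<bar>a\<bar>)"
    using assms(1) by (intro lborel_real_affine) auto
  then have "distr lborel borel (\<lambda>t. b + a * t) = lborel"
    using assms(1) by (simp add: density_1)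
  then have "emeasure lborel X = emeasure (distr lborel borel (\<lambda>t. b + a * t)) X"
    by simp
  also have "\<dots> = emeasure lborel ((\<lambda>t. b + a * t) -` X \<inter> space lborel)"
    using assms(2) by (intro emeasure_distr) auto
  also have "(\<lambda>t. b + a * t) -` X \<inter> space lborel = {t. a * t + b \<in> X}"
    by (auto simp: add.commute)
  finally show ?thesis ..
qed

lemma signed_permutation_measurable:
  assumes "\<pi> permutes {..<k}"
  shows "(\<lambda>x. \<lambda>i\<in>{..<k}. a i * x (\<pi> i) + b i) \<in> lborel_pi k \<rightarrow>\<^sub>M lborel_pi k"
proof (rule measurable_restrict)
  fix i assume "i \<in> {..<k}"
  then have "\<pi> i \<in> {..<k}"
    using permutes_in_image[OF assms] by blast
  then show "(\<lambda>x. a i * x (\<pi> i) + b i) \<in> lborel_pi k \<rightarrow>\<^sub>M lborel"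
    by measurable
qed

lemma distr_lborel_pi_signed_permutation:
  assumes p: "\<pi> permutes {..<k}" and a: "\<forall>i<k. \<bar>a i\<bar> = 1"
  shows "distr (lborel_pi k) (lborel_pi k) (\<lambda>x. \<lambda>i\<in>{..<k}. a i * x (\<pi> i) + b i) = lborel_pi k"
proof (rule lborel_pi.PiM_eqI)
  let ?T = "\<lambda>x. \<lambda>i\<in>{..<k}. a i * x (\<pi> i) + b i"
  let ?q = "inv \<pi>"
  let ?C = "\<lambda>A j. {t. a (?q j) * t + b (?q j) \<in> A (?q j)}"
  have qp: "\<pi> (?q j) = j" "?q (\<pi> j) = j" for j
    using permutes_inverses[OF p] by auto
  have pin: "\<pi> i < k" if "i < k" for i
    using permutes_in_image[OF p] that by simp
  have qin: "?q i < k" if "i < k" for i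
    using permutes_in_image[OF permutes_inv[OF p]] that by simp
  fix A :: "nat \<Rightarrow> real set" assume A: "\<And>i. i \<in> {..<k} \<Longrightarrow> A i \<in> sets lborel"
  have "?T -` PiE {..<k} A \<inter> space (lborel_pi k) = PiE {..<k} (?C A)"
  proof (intro set_eqI iffI)
    fix x assume x: "x \<in> ?T -` PiE {..<k} A \<inter> space (lborel_pi k)"
    have "x j \<in> ?C A j" if "j < k" for j
    proof -
      have "a (?q j) * x (\<pi> (?q j)) + b (?q j) \<in> A (?q j)"
        using x qin[OF that] by (auto simp: PiE_iff)
      then show ?thesis
        using qp(1)[of j] by simp
    qed
    with x show "x \<in> PiE {..<k} (?C A)"
      by (auto simp: space_PiM PiE_iff)
  next
    fix x assume "x \<in> PiE {..<k} (?C A)"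
    moreover have "a i * x (\<pi> i) + b i \<in> A i" if "x (\<pi> i) \<in> ?C A (\<pi> i)" for i
      using that qp(2)[of i] by simp
    ultimately show "x \<in> ?T -` PiE {..<k} A \<inter> space (lborel_pi k)"
      using pin by (auto simp: space_PiM PiE_iff)
  qed
  then have "emeasure (distr (lborel_pi k) (lborel_pi k) ?T) (PiE {..<k} A) =
      emeasure (lborel_pi k) (PiE {..<k} (?C A))"
    using A signed_permutation_measurable[OF p] by (subst emeasure_distr) (auto intro: sets_PiM_I_finite)
  also have "\<dots> = (\<Prod>j<k. emeasure lborel (?C A j))"
    using A qin by (intro lborel_pi.emeasure_PiM) auto
  also have "\<dots> = (\<Prod>j<k. emeasure lborel (A (?q j)))"
    using A qin a by (intro prod.cong refl emeasure_lborel_vimage_unimodular_affine) auto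
  also have "\<dots> = (\<Prod>i<k. emeasure lborel (A i))"
    using prod.permute[OF permutes_inv[OF p], of "\<lambda>i. emeasure lborel (A i)"] by (simp add: comp_def)
  finally show "emeasure (distr (lborel_pi k) (lborel_pi k) ?T) (PiE {..<k} A) =
      (\<Prod>i\<in>{..<k}. emeasure lborel (A i))" .
qed simp_all

lemma nn_integral_lborel_pi_signed_permutation:
  assumes "\<pi> permutes {..<k}" "\<forall>i<k. \<bar>a i\<bar> = 1" "f \<in> borel_measurable (lborel_pi k)"
  shows "(\<integral>\<^sup>+x. f x \<partial>lborel_pi k) = (\<integral>\<^sup>+z. f (\<lambda>i\<in>{..<k}. a i * z (\<pi> i) + b i) \<partial>lborel_pi k)"
proof -
  let ?T = "\<lambda>x. \<lambda>i\<in>{..<k}. a i * x (\<pi> i) + b i"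
  have "(\<integral>\<^sup>+x. f x \<partial>lborel_pi k) = (\<integral>\<^sup>+x. f x \<partial>distr (lborel_pi k) (lborel_pi k) ?T)"
    using assms(1,2) by (simp add: distr_lborel_pi_signed_permutation)
  also have "\<dots> = (\<integral>\<^sup>+z. f (?T z) \<partial>lborel_pi k)"
    using assms(1,3) by (intro nn_integral_distr signed_permutation_measurable) simp_all
  finally show ?thesis .
qed

lemma cone_map_permute_list:
  assumes "\<pi> permutes {..<length ls}"
  shows "cone_map \<mu> (permute_list \<pi> ls) (\<lambda>i\<in>{..<length ls}. z (\<pi> i)) = cone_map \<mu> ls z"
proof -
  have "cone_map \<mu> (permute_list \<pi> ls) (\<lambda>i\<in>{..<length ls}. z (\<pi> i)) =
      \<mu> + (\<Sum>i<length ls. z (\<pi> i) *\<^sub>R ls ! \<pi> i)"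
    unfolding cone_map_def using assms by (simp add: permute_list_nth)
  also have "\<dots> = cone_map \<mu> ls z"
    unfolding cone_map_def using sum.permute[OF assms, of "\<lambda>i. z i *\<^sub>R ls ! i"] by (simp add: comp_def)
  finally show ?thesis .
qed

lemma cone_measure_mset_eq:
  assumes "mset ls = mset ls'"
  shows "cone_measure \<mu> ls = cone_measure \<mu> ls'"
proof (rule measure_eqI)
  fix X assume "X \<in> sets (cone_measure \<mu> ls)"
  then have X: "X \<in> sets borel"
    by (simp add: cone_measure_def)
  obtain \<pi> where \<pi>: "\<pi> permutes {..<length ls'}" "permute_list \<pi> ls' = ls"
    using mset_eq_permutation[OF assms] by blast
  define k where "k = length ls'"
  have k: "length ls = k"
    using \<pi>(2) unfolding k_def by auto
  have \<pi>k: "\<pi> permutes {..<k}"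
    using \<pi>(1) by (simp add: k_def)
  let ?F = "\<lambda>ls x. indicator {x. \<forall>i<k. 0 \<le> x i} x * indicator X (cone_map \<mu> ls x) :: ennreal"
  have F: "?F ls (\<lambda>i\<in>{..<k}. 1 * z (\<pi> i) + 0) = ?F ls' z" for z
  proof -
    have "(\<forall>i<k. 0 \<le> z (\<pi> i)) \<longleftrightarrow> (\<forall>i\<in>\<pi> ` {..<k}. 0 \<le> z i)"
      by auto
    then have "(\<forall>i<k. 0 \<le> z (\<pi> i)) \<longleftrightarrow> (\<forall>i<k. 0 \<le> z i)"
      unfolding permutes_image[OF \<pi>k] by auto
    with cone_map_permute_list[OF \<pi>(1), of \<mu> z] show ?thesis
      unfolding \<pi>(2) k_def by (simp add: indicator_def)
  qed
  have measurable: "?F ls \<in> borel_measurable (lborel_pi k)"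
    using cone_integrand_measurable[OF X, of ls \<mu>] unfolding k .
  have "emeasure (cone_measure \<mu> ls) X = (\<integral>\<^sup>+x. ?F ls x \<partial>lborel_pi k)"
    using emeasure_cone_measure[OF X, of \<mu> ls] unfolding k .
  also have "\<dots> = (\<integral>\<^sup>+z. ?F ls (\<lambda>i\<in>{..<k}. 1 * z (\<pi> i) + 0) \<partial>lborel_pi k)"
    by (rule nn_integral_lborel_pi_signed_permutation[OF \<pi>k _ measurable]) simp
  also have "\<dots> = emeasure (cone_measure \<mu> ls') X"
    unfolding F unfolding k_def by (rule emeasure_cone_measure[OF X, symmetric])
  finally show "emeasure (cone_measure \<mu> ls) X = emeasure (cone_measure \<mu> ls') X" .
qed (simp add: cone_measure_def)

section \<open>Difference operators on cone measures\<close>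

abbreviation flip_weights :: "bool list \<Rightarrow> 'a::uminus list \<Rightarrow> 'a list" where
  "flip_weights bs v \<equiv> map2 (\<lambda>b l. if b then - l else l) bs v"

definition flip_sign :: "bool list \<Rightarrow> nat \<Rightarrow> real" where
  "flip_sign bs j = (if bs ! j then -1 else 1)"

lemma abs_flip_sign [simp]: "\<bar>flip_sign bs j\<bar> = 1"
  by (simp add: flip_sign_def)

lemma flip_sign_square [simp]: "flip_sign bs j * flip_sign bs j = 1"
  by (simp add: flip_sign_def)

lemma nth_flip_weights:
  fixes v :: "'a::real_vector list"
  shows "length bs = length v \<Longrightarrow> j < length v \<Longrightarrow> flip_weights bs v ! j = flip_sign bs j *\<^sub>R v ! j"
  by (auto simp: flip_sign_def)

lemma flip_weights_replicate_False: "flip_weights (replicate (length v) False) v = v"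
  by (induction v) auto

lemma prod_flip_sign: "(\<Prod>j<length bs. flip_sign bs j) = (-1) ^ length (filter id bs)"
  by (induction bs) (auto simp: prod.lessThan_Suc_shift flip_sign_def simp del: prod.lessThan_Suc)

definition signed_orthant :: "bool list \<Rightarrow> nat set \<Rightarrow> (nat \<Rightarrow> real) set" where
  "signed_orthant bs S = {z. \<forall>j<length bs. 0 \<le> flip_sign bs j * (z j - of_bool (j \<in> S))}"

lemma indicator_signed_orthant_measurable [measurable]:
  "(indicator (signed_orthant bs S) :: _ \<Rightarrow> 'a::{second_countable_topology, linorder_topology, zero_neq_one})
     \<in> borel_measurable (lborel_pi (length bs))"
proof -
  have "indicator (signed_orthant bs S) =
      (\<lambda>z. if \<forall>j<length bs. 0 \<le> flip_sign bs j * (z j - of_bool (j \<in> S)) then 1 else (0::'a))"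
    by (auto simp: indicator_def signed_orthant_def)
  also have "\<dots> \<in> borel_measurable (lborel_pi (length bs))"
    by measurable
  finally show ?thesis .
qed

lemma cone_map_flip_weights:
  fixes v :: "'a::real_vector list"
  assumes "length bs = length v" "S \<subseteq> {..<length v}"
  shows "cone_map \<mu> (flip_weights bs v) (\<lambda>j\<in>{..<length v}. flip_sign bs j * (z j - of_bool (j \<in> S)))
      + (\<Sum>j\<in>S. v ! j) = cone_map \<mu> v z"
proof -
  let ?x = "\<lambda>j\<in>{..<length v}. flip_sign bs j * (z j - of_bool (j \<in> S))"
  have "?x j *\<^sub>R flip_weights bs v ! j = z j *\<^sub>R v ! j - of_bool (j \<in> S) *\<^sub>R v ! j"
    if "j < length v" for j
  proof -
    have "?x j *\<^sub>R flip_weights bs v ! j = ?x j *\<^sub>R flip_sign bs j *\<^sub>R v ! j"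
      using that assms(1) by (simp only: nth_flip_weights)
    also have "\<dots> = (flip_sign bs j * flip_sign bs j * (z j - of_bool (j \<in> S))) *\<^sub>R v ! j"
      using that by (simp del: flip_sign_square add: algebra_simps)
    finally show ?thesis
      by (simp add: scaleR_diff_left)
  qed
  then have "cone_map \<mu> (flip_weights bs v) ?x =
      \<mu> + (\<Sum>j<length v. z j *\<^sub>R v ! j) - (\<Sum>j<length v. of_bool (j \<in> S) *\<^sub>R v ! j)"
    unfolding cone_map_def using assms(1) by (simp add: sum_subtractf)
  also have "(\<Sum>j<length v. of_bool (j \<in> S) *\<^sub>R v ! j) = (\<Sum>j\<in>{..<length v} \<inter> S. v ! j)"
    unfolding sum.inter_restrict[OF finite_lessThan] by (intro sum.cong) auto
  also have "{..<length v} \<inter> S = S"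
    using assms(2) by auto
  finally show ?thesis
    by (simp add: cone_map_def)
qed

lemma emeasure_cone_measure_flip_shift:
  fixes v :: "(real^'n) list"
  assumes "length bs = length v" "S \<subseteq> {..<length v}" "B \<in> sets borel"
  shows "emeasure (cone_measure \<mu> (flip_weights bs v)) (shift (\<Sum>j\<in>S. v ! j) B) =
    (\<integral>\<^sup>+z. indicator (signed_orthant bs S) z * indicator B (cone_map \<mu> v z) \<partial>lborel_pi (length v))"
proof -
  define k where "k = length v"
  let ?ls = "flip_weights bs v"
  let ?c = "\<Sum>j\<in>S. v ! j"
  let ?F = "\<lambda>x. indicator {x. \<forall>i<k. 0 \<le> x i} x * indicator (shift ?c B) (cone_map \<mu> ?ls x) :: ennreal"
  let ?T = "\<lambda>z. \<lambda>j\<in>{..<k}. flip_sign bs j * z (id j) + - flip_sign bs j * of_bool (j \<in> S)"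
  have lk: "length ?ls = k"
    using assms(1) by (simp add: k_def)
  have measurable: "?F \<in> borel_measurable (lborel_pi k)"
    using cone_integrand_measurable[OF sets_borel_shift[OF assms(3)], of ?ls ?c \<mu>] unfolding lk .
  have F: "?F (?T z) = indicator (signed_orthant bs S) z * indicator B (cone_map \<mu> v z)" for z
  proof -
    have T: "?T z = (\<lambda>j\<in>{..<length v}. flip_sign bs j * (z j - of_bool (j \<in> S)))"
      by (simp add: k_def right_diff_distrib)
    have "?T z \<in> {x. \<forall>i<k. 0 \<le> x i} \<longleftrightarrow> z \<in> signed_orthant bs S"
      unfolding T by (simp add: signed_orthant_def assms(1) k_def)
    moreover have "cone_map \<mu> ?ls (?T z) + ?c = cone_map \<mu> v z"
      unfolding T using assms(1,2) by (rule cone_map_flip_weights)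
    ultimately show ?thesis
      unfolding indicator_def by (simp add: shift_def)
  qed
  have "emeasure (cone_measure \<mu> ?ls) (shift ?c B) = (\<integral>\<^sup>+x. ?F x \<partial>lborel_pi k)"
    using emeasure_cone_measure[OF sets_borel_shift[OF assms(3)], of \<mu> ?ls] unfolding lk .
  also have "\<dots> = (\<integral>\<^sup>+z. ?F (?T z) \<partial>lborel_pi k)"
    by (rule nn_integral_lborel_pi_signed_permutation[OF permutes_id _ measurable]) simp
  also have "\<dots> = (\<integral>\<^sup>+z. indicator (signed_orthant bs S) z * indicator B (cone_map \<mu> v z) \<partial>lborel_pi k)"
    unfolding F ..
  finally show ?thesis
    unfolding k_def .
qed

lemma measure_cone_measure_flip_shift:
  fixes v :: "(real^'n) list"
  assumes "length bs = length v" "in_open_halfspace (flip_weights bs v)"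
    and "S \<subseteq> {..<length v}" "B \<in> sets borel" "bounded B"
  shows "integrable (lborel_pi (length v))
      (\<lambda>z. indicator (signed_orthant bs S) z * indicator B (cone_map \<mu> v z) :: real)"
    and "measure (cone_measure \<mu> (flip_weights bs v)) (shift (\<Sum>j\<in>S. v ! j) B) =
      (\<integral>z. indicator (signed_orthant bs S) z * indicator B (cone_map \<mu> v z) \<partial>lborel_pi (length v))"
proof -
  let ?f = "\<lambda>z. indicator (signed_orthant bs S) z * indicator B (cone_map \<mu> v z) :: real"
  have "(indicator (signed_orthant bs S) :: _ \<Rightarrow> real) \<in> borel_measurable (lborel_pi (length v))"
    using indicator_signed_orthant_measurable[of bs S] unfolding assms(1) .
  moreover have "(\<lambda>z. indicator B (cone_map \<mu> v z) :: real) \<in> borel_measurable (lborel_pi (length v))"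
    using assms(4) by measurable
  ultimately have measurable: "?f \<in> borel_measurable (lborel_pi (length v))"
    by (rule borel_measurable_times)
  have "emeasure (cone_measure \<mu> (flip_weights bs v)) (shift (\<Sum>j\<in>S. v ! j) B) < \<infinity>"
    using assms(2,4,5) by (intro emeasure_cone_measure_finite sets_borel_shift bounded_shift)
  then show integrable: "integrable (lborel_pi (length v)) ?f"
    unfolding emeasure_cone_measure_flip_shift[OF assms(1,3,4)]
    by (intro integrableI_nonneg measurable) (auto simp: ennreal_indicator ennreal_mult')
  show "measure (cone_measure \<mu> (flip_weights bs v)) (shift (\<Sum>j\<in>S. v ! j) B) =
      (\<integral>z. ?f z \<partial>lborel_pi (length v))"
    unfolding measure_def emeasure_cone_measure_flip_shift[OF assms(1,3,4)]
    by (subst integral_eq_nn_integral) (auto simp: measurable ennreal_indicator ennreal_mult')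
qed

lemma prod_of_bool: "finite A \<Longrightarrow> (\<Prod>x\<in>A. of_bool (P x)) = (of_bool (\<forall>x\<in>A. P x) :: 'a::comm_semiring_1)"
  by (induction A rule: finite_induct) auto

lemma sum_Pow_alternating_prod:
  fixes g :: "'i \<Rightarrow> bool \<Rightarrow> 'a::comm_ring_1"
  assumes "finite I"
  shows "(\<Sum>S\<in>Pow I. (-1) ^ card S * (\<Prod>j\<in>I. g j (j \<in> S))) = (\<Prod>j\<in>I. g j False - g j True)"
proof -
  have "(\<Prod>j\<in>I. g j False - g j True) = (\<Prod>j\<in>I. - g j True + g j False)"
    by simp
  also have "\<dots> = (\<Sum>S\<in>Pow I. (\<Prod>j\<in>S. - g j True) * (\<Prod>j\<in>I - S. g j False))"
    using assms by (rule prod_add)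
  also have "\<dots> = (\<Sum>S\<in>Pow I. (-1) ^ card S * (\<Prod>j\<in>I. g j (j \<in> S)))"
  proof (rule sum.cong[OF refl])
    fix S assume "S \<in> Pow I"
    then have "S \<subseteq> I"
      by simp
    have "(\<Prod>j\<in>I. g j (j \<in> S)) = (\<Prod>j\<in>I - S. g j (j \<in> S)) * (\<Prod>j\<in>S. g j (j \<in> S))"
      using \<open>S \<subseteq> I\<close> assms by (rule prod.subset_diff)
    also have "\<dots> = (\<Prod>j\<in>I - S. g j False) * (\<Prod>j\<in>S. g j True)"
      by (intro arg_cong2[where f = "(*)"] prod.cong) auto
    finally show "(\<Prod>j\<in>S. - g j True) * (\<Prod>j\<in>I - S. g j False) = (-1) ^ card S * (\<Prod>j\<in>I. g j (j \<in> S))"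
      by (simp add: prod_uminus)
  qed
  finally show ?thesis ..
qed

lemma of_bool_step_diff:
  fixes \<sigma> t :: real
  assumes "\<bar>\<sigma>\<bar> = 1" "t \<noteq> 0" "t \<noteq> 1"
  shows "of_bool (0 \<le> \<sigma> * t) - of_bool (0 \<le> \<sigma> * (t - 1)) = \<sigma> * indicator {0..1} t"
  using assms by (cases "\<sigma> = 1") (auto simp: indicator_def abs_if split: if_splits)

lemma alternating_sum_signed_orthant:
  assumes "\<forall>j<length bs. z j \<notin> {0, 1}"
  shows "(\<Sum>S\<in>Pow {..<length bs}. (-1) ^ card S * indicator (signed_orthant bs S) z) =
    (-1) ^ length (filter id bs) * (\<Prod>j<length bs. indicator {0..1} (z j) :: real)"
proof -
  let ?g = "\<lambda>j b. of_bool (0 \<le> flip_sign bs j * (z j - of_bool b)) :: real"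
  have indicator: "indicator (signed_orthant bs S) z = (\<Prod>j<length bs. ?g j (j \<in> S))" for S
    by (simp only: indicator_def signed_orthant_def mem_Collect_eq prod_of_bool[OF finite_lessThan]
        lessThan_iff Ball_def)
  have "(\<Sum>S\<in>Pow {..<length bs}. (-1) ^ card S * indicator (signed_orthant bs S) z) =
      (\<Sum>S\<in>Pow {..<length bs}. (-1) ^ card S * (\<Prod>j<length bs. ?g j (j \<in> S)))"
    unfolding indicator ..
  also have "\<dots> = (\<Prod>j<length bs. ?g j False - ?g j True)"
    by (rule sum_Pow_alternating_prod[of _ ?g]) simp
  also have "\<dots> = (\<Prod>j<length bs. flip_sign bs j * indicator {0..1} (z j))"
  proof (rule prod.cong[OF refl])
    fix j assume "j \<in> {..<length bs}"
    then show "?g j False - ?g j True = flip_sign bs j * indicator {0..1} (z j)"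
      using of_bool_step_diff[of "flip_sign bs j" "z j"] assms by simp
  qed
  also have "\<dots> = (-1) ^ length (filter id bs) * (\<Prod>j<length bs. indicator {0..1} (z j))"
    by (simp add: prod.distrib prod_flip_sign)
  finally show ?thesis .
qed

lemma AE_lborel_pi_avoid_countable:
  assumes "countable N"
  shows "AE z in lborel_pi k. \<forall>j\<in>{..<k}. z j \<notin> N"
proof -
  have N: "N \<in> sets borel"
    using null_setsD2[OF countable_imp_null_set_lborel[OF assms]] by simp
  have "AE z in lborel_pi k. z j \<notin> N" if j: "j \<in> {..<k}" for j
  proof -
    let ?N = "PiE {..<k} (\<lambda>i. if i = j then N else UNIV)"
    have "emeasure (lborel_pi k) ?N = (\<Prod>i<k. emeasure lborel (if i = j then N else UNIV))"
      using N by (intro lborel_pi.emeasure_PiM) auto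
    also have "\<dots> = 0"
      using j assms by (intro prod_zero) (auto intro!: bexI[of _ j] emeasure_lborel_countable)
    finally have "?N \<in> null_sets (lborel_pi k)"
      using N by (auto intro!: sets_PiM_I_finite simp: null_sets_def)
    moreover have "{z \<in> space (lborel_pi k). \<not> z j \<notin> N} \<subseteq> ?N"
      using j by (auto simp: space_PiM PiE_iff extensional_def)
    ultimately show ?thesis
      by (rule AE_I')
  qed
  then show ?thesis
    by (intro AE_finite_allI) auto
qed

lemma AE_alternating_sum_signed_orthant:
  "AE z in lborel_pi (length bs).
     (\<Sum>S\<in>Pow {..<length bs}. (-1) ^ card S * (indicator (signed_orthant bs S) z * c z)) =
     (-1) ^ length (filter id bs) * ((\<Prod>j<length bs. indicator {0..1} (z j)) * c z :: real)"
proof -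
  have "AE z in lborel_pi (length bs). \<forall>j\<in>{..<length bs}. z j \<notin> {0, 1}"
    by (rule AE_lborel_pi_avoid_countable) simp
  then show ?thesis
  proof eventually_elim
    case (elim z)
    have "(\<Sum>S\<in>Pow {..<length bs}. (-1) ^ card S * (indicator (signed_orthant bs S) z * c z)) =
        (\<Sum>S\<in>Pow {..<length bs}. (-1) ^ card S * indicator (signed_orthant bs S) z) * c z"
      by (simp only: sum_distrib_right mult.assoc)
    with elim show ?case
      using alternating_sum_signed_orthant[of bs z] by simp
  qed
qed

definition parallelepiped_val :: "real^'n \<Rightarrow> (real^'n) list \<Rightarrow> (real^'n) set \<Rightarrow> real" where
  "parallelepiped_val \<mu> v B =
     (\<integral>z. (\<Prod>j<length v. indicator {0..1} (z j)) * indicator B (cone_map \<mu> v z) \<partial>lborel_pi (length v))"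

lemma diff_op_cone_measure_flip:
  fixes v :: "(real^'n) list"
  assumes "length bs = length v" "in_open_halfspace (flip_weights bs v)" "B \<in> sets borel" "bounded B"
  shows "diff_op {..<length v} (nth v) (measure (cone_measure \<mu> (flip_weights bs v))) B =
    (-1) ^ length (filter id bs) * parallelepiped_val \<mu> v B"
proof -
  let ?k = "length v"
  let ?f = "\<lambda>S z. indicator (signed_orthant bs S) z * indicator B (cone_map \<mu> v z) :: real"
  let ?box = "\<lambda>z. (\<Prod>j<?k. indicator {0..1} (z j)) * indicator B (cone_map \<mu> v z) :: real"
  note integrable = measure_cone_measure_flip_shift(1)[OF assms(1,2) _ assms(3,4)]
  have "(\<lambda>z. indicator {0..1} (z j) :: real) \<in> borel_measurable (lborel_pi ?k)" if "j < ?k" for j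
    using that by (intro measurable_compose[OF measurable_component_singleton]) auto
  moreover have "(\<lambda>z. indicator B (cone_map \<mu> v z) :: real) \<in> borel_measurable (lborel_pi ?k)"
    using assms(3) by measurable
  ultimately have box_measurable: "?box \<in> borel_measurable (lborel_pi ?k)"
    by (intro borel_measurable_times borel_measurable_prod) auto
  have "diff_op {..<?k} (nth v) (measure (cone_measure \<mu> (flip_weights bs v))) B =
      (\<Sum>S\<in>Pow {..<?k}. \<integral>z. (-1) ^ card S * ?f S z \<partial>lborel_pi ?k)"
    unfolding diff_op_def using measure_cone_measure_flip_shift(2)[OF assms(1,2) _ assms(3,4)]
    by (intro sum.cong) auto
  also have "\<dots> = (\<integral>z. (\<Sum>S\<in>Pow {..<?k}. (-1) ^ card S * ?f S z) \<partial>lborel_pi ?k)"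
    using integrable by (intro Bochner_Integration.integral_sum[symmetric]) auto
  also have "\<dots> = (\<integral>z. (-1) ^ length (filter id bs) * ?box z \<partial>lborel_pi ?k)"
  proof (rule integral_cong_AE)
    show "AE z in lborel_pi ?k.
        (\<Sum>S\<in>Pow {..<?k}. (-1) ^ card S * ?f S z) = (-1) ^ length (filter id bs) * ?box z"
      using AE_alternating_sum_signed_orthant[of bs "\<lambda>z. indicator B (cone_map \<mu> v z)"]
      unfolding assms(1) .
  qed (use integrable box_measurable in \<open>auto intro!: borel_measurable_sum\<close>)
  also have "\<dots> = (-1) ^ length (filter id bs) * parallelepiped_val \<mu> v B"
    unfolding parallelepiped_val_def by (rule integral_mult_right_zero)
  finally show ?thesis .
qed

section \<open>Supports and Fourier equivalence\<close>

lemma in_open_halfspace_nonzero: "in_open_halfspace ls \<Longrightarrow> l \<in> set ls \<Longrightarrow> l \<noteq> 0"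
  unfolding in_open_halfspace_def by fastforce

lemma lincomb_val_Un:
  assumes "\<forall>t\<in>set ts. valid_cone_term t" "A \<in> sets borel" "B \<in> sets borel"
    and "bounded A" "bounded B" "A \<inter> B = {}"
  shows "lincomb_val ts (A \<union> B) = lincomb_val ts A + lincomb_val ts B"
proof -
  have "cone_term_val t (A \<union> B) = cone_term_val t A + cone_term_val t B" if "t \<in> set ts" for t
  proof -
    obtain C \<mu> ls where t: "t = (C, \<mu>, ls)"
      by (cases t) auto
    with assms(1) that have halfspace: "in_open_halfspace ls"
      by (auto simp: valid_cone_term_def)
    have "emeasure (cone_measure \<mu> ls) A \<noteq> \<infinity>" "emeasure (cone_measure \<mu> ls) B \<noteq> \<infinity>"
      using emeasure_cone_measure_finite[OF halfspace assms(2,4)]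
        emeasure_cone_measure_finite[OF halfspace assms(3,5)] by (simp_all add: less_top)
    then have "measure (cone_measure \<mu> ls) (A \<union> B) = measure (cone_measure \<mu> ls) A + measure (cone_measure \<mu> ls) B"
      using assms(2,3,6) by (intro measure_Union) (auto simp: cone_measure_def)
    then show ?thesis
      by (simp add: t cone_term_val_def algebra_simps)
  qed
  then show ?thesis
    unfolding lincomb_val_def by (simp add: sum_list_addf cong: map_cong)
qed

lemma lincomb_val_eq_0_if_covered:
  assumes valid: "\<forall>t\<in>set ts. valid_cone_term t" and "finite F"
    and local0: "\<forall>x\<in>F. \<forall>B\<in>sets borel. B \<subseteq> ball x (e x) \<longrightarrow> lincomb_val ts B = 0"
  shows "A \<in> sets borel \<Longrightarrow> bounded A \<Longrightarrow> A \<subseteq> (\<Union>x\<in>F. ball x (e x)) \<Longrightarrow> lincomb_val ts A = 0"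
  using \<open>finite F\<close> local0
proof (induction F arbitrary: A rule: finite_induct)
  case empty
  then show ?case
    by (simp add: lincomb_val_def cone_term_val_def)
next
  case (insert x F)
  let ?U = "ball x (e x)"
  have "lincomb_val ts A = lincomb_val ts (A \<inter> ?U) + lincomb_val ts (A - ?U)"
    using lincomb_val_Un[OF valid, of "A \<inter> ?U" "A - ?U"] insert.prems(1,2)
    by (simp add: Int_Diff_Un bounded_Int bounded_diff Int_Diff_disjoint)
  moreover have "lincomb_val ts (A \<inter> ?U) = 0"
    using insert.prems(1,4) by auto
  moreover have "lincomb_val ts (A - ?U) = 0"
    using insert.prems by (intro insert.IH) (auto simp: bounded_diff)
  ultimately show ?case
    by simp
qed

lemma null_far_from_support:
  fixes P :: "(real^'n) set"
  assumes valid: "\<forall>t\<in>set ts. valid_cone_term t" and "lincomb_support ts \<subseteq> P" "0 < r"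
  shows "null_far_from P r (lincomb_val ts)"
  unfolding null_far_from_def
proof (intro ballI impI)
  fix A :: "(real^'n) set" assume A: "A \<in> sets borel" "bounded A" and far: "\<forall>a\<in>A. r \<le> infdist a P"
  have "closure A \<subseteq> {y. r \<le> infdist y P}"
    using far by (intro closure_minimal closed_Collect_le continuous_on_const continuous_on_infdist
      continuous_on_id) auto
  then have "x \<notin> lincomb_support ts" if "x \<in> closure A" for x
    using assms(2,3) that infdist_zero[of x P] by fastforce
  then have "\<forall>x\<in>closure A. \<exists>e>0. \<forall>B\<in>sets borel. B \<subseteq> ball x e \<longrightarrow> lincomb_val ts B = 0"
    unfolding lincomb_support_def by auto
  then obtain e where e: "\<forall>x\<in>closure A. e x > 0 \<and> (\<forall>B\<in>sets borel. B \<subseteq> ball x (e x) \<longrightarrow> lincomb_val ts B = 0)"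
    by metis
  have "compact (closure A)"
    using A(2) by (simp add: compact_closure)
  moreover have "closure A \<subseteq> (\<Union>x\<in>closure A. ball x (e x))"
    using e by force
  ultimately obtain F where F: "F \<subseteq> closure A" "finite F" "closure A \<subseteq> (\<Union>x\<in>F. ball x (e x))"
    using compactE_image[of "closure A" "closure A" "\<lambda>x. ball x (e x)"] by auto
  show "lincomb_val ts A = 0"
  proof (rule lincomb_val_eq_0_if_covered[OF valid F(2)])
    show "\<forall>x\<in>F. \<forall>B\<in>sets borel. B \<subseteq> ball x (e x) \<longrightarrow> lincomb_val ts B = 0"
      using e F(1) by blast
    show "A \<subseteq> (\<Union>x\<in>F. ball x (e x))"
      using F(3) closure_subset by blast
  qed (use A in auto)
qed

lemma fourier_equiv_term_diff_op:
  assumes "valid_cone_term t" "valid_cone_term (D, \<mu>, v)" "fourier_equiv_term t (D, \<mu>, v)"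
  shows "null_on_bounded (diff_op {..<length v} (nth v) (\<lambda>A. cone_term_val t A - cone_term_val (D, \<mu>, v) A))"
proof -
  obtain C \<mu>' ls where t: "t = (C, \<mu>', ls)"
    by (cases t) auto
  have "fourier_equiv_term (C, \<mu>', ls) (D, \<mu>, v)"
    using assms(3) t by simp
  then obtain bs where bs: "\<mu>' = \<mu>" "length bs = length v"
    "mset ls = mset (flip_weights bs v)" "C = (-1) ^ length (filter id bs) * D"
    unfolding fourier_equiv_term_def prod.case by blast
  have "set ls = set (flip_weights bs v)"
    using arg_cong[OF bs(3), of set_mset] by simp
  then have halfspace_flip: "in_open_halfspace (flip_weights bs v)"
    using assms(1) t by (simp add: valid_cone_term_def in_open_halfspace_def)
  have halfspace: "in_open_halfspace (flip_weights (replicate (length v) False) v)"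
    using assms(2) by (simp add: valid_cone_term_def flip_weights_replicate_False)
  show ?thesis
    unfolding null_on_bounded_def
  proof (intro ballI impI)
    fix B :: "(real^'a) set" assume B: "B \<in> sets borel" "bounded B"
    let ?Q = "parallelepiped_val \<mu> v B" and ?s = "(-1) ^ length (filter id bs) :: real"
    have "diff_op {..<length v} (nth v) (\<lambda>A. cone_term_val t A - cone_term_val (D, \<mu>, v) A) B =
        C * diff_op {..<length v} (nth v) (measure (cone_measure \<mu> (flip_weights bs v))) B
        - D * diff_op {..<length v} (nth v) (measure (cone_measure \<mu> v)) B"
      unfolding t bs(1) cone_term_val_def prod.case cone_measure_mset_eq[OF bs(3)] by (rule diff_op_lincomb)
    also have "\<dots> = C * (?s * ?Q) - D * ?Q"
      using diff_op_cone_measure_flip[OF bs(2) halfspace_flip B, of \<mu>]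
        diff_op_cone_measure_flip[OF length_replicate halfspace B, of \<mu>]
      by (simp only: flip_weights_replicate_False) simp
    also have "\<dots> = (?s * ?s - 1) * D * ?Q"
      unfolding bs(4) by (simp add: algebra_simps)
    also have "?s * ?s = 1"
      by (simp flip: power_mult_distrib)
    finally show "diff_op {..<length v} (nth v) (\<lambda>A. cone_term_val t A - cone_term_val (D, \<mu>, v) A) B = 0"
      by simp
  qed
qed

definition weight_index :: "('c \<times> 'm \<times> 'a list) list \<Rightarrow> (nat \<times> nat) set" where
  "weight_index ts = (SIGMA t:{..<length ts}. {..<length (snd (snd (ts ! t)))})"

definition weight :: "('c \<times> 'm \<times> 'a list) list \<Rightarrow> nat \<times> nat \<Rightarrow> 'a" where
  "weight ts = (\<lambda>(t, j). snd (snd (ts ! t)) ! j)"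

lemma finite_weight_index: "finite (weight_index ts)"
  by (simp add: weight_index_def)

lemma weight_nonzero:
  assumes "\<forall>t \<in> set ts. valid_cone_term t" "i \<in> weight_index ts"
  shows "weight ts i \<noteq> 0"
proof -
  obtain t j where i: "i = (t, j)" "t < length ts" "j < length (snd (snd (ts ! t)))"
    using assms(2) unfolding weight_index_def by auto
  have "valid_cone_term (ts ! t)"
    using assms(1) i(2) by simp
  then have "in_open_halfspace (snd (snd (ts ! t)))"
    by (cases "ts ! t") (simp add: valid_cone_term_def)
  with i show ?thesis
    unfolding weight_def using in_open_halfspace_nonzero[OF _ nth_mem[OF i(3)]] by simp
qed

lemma fourier_equiv_diff_op:
  assumes "\<forall>t \<in> set fs. valid_cone_term t" "\<forall>t \<in> set gs. valid_cone_term t" "fourier_equiv fs gs"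
  shows "null_on_bounded (diff_op (weight_index gs) (weight gs) (\<lambda>A. lincomb_val fs A - lincomb_val gs A))"
proof -
  let ?N = "length gs"
  have N: "length fs = ?N"
    using assms(3) unfolding fourier_equiv_def by (rule list_all2_lengthD)
  have "null_on_bounded (diff_op (weight_index gs) (weight gs)
      (\<lambda>A. cone_term_val (fs ! t) A - cone_term_val (gs ! t) A))" if "t < ?N" for t
  proof -
    obtain D \<mu> v where gt: "gs ! t = (D, \<mu>, v)"
      by (cases "gs ! t") auto
    have "fourier_equiv_term (fs ! t) (gs ! t)"
      using assms(3) that N unfolding fourier_equiv_def by (simp add: list_all2_conv_all_nth)
    moreover have "valid_cone_term (fs ! t)" "valid_cone_term (gs ! t)"
      using assms(1,2) that N by auto
    ultimately have "null_on_bounded (diff_op (Pair t ` {..<length v}) (weight gs)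
        (\<lambda>A. cone_term_val (fs ! t) A - cone_term_val (gs ! t) A))"
      using fourier_equiv_term_diff_op gt by (simp add: diff_op_reindex inj_on_def weight_def comp_def)
    then show ?thesis
      using that gt finite_weight_index
      by (elim null_on_bounded_diff_op_superset) (auto simp: weight_index_def)
  qed
  moreover have "lincomb_val fs A - lincomb_val gs A =
      (\<Sum>t<?N. cone_term_val (fs ! t) A - cone_term_val (gs ! t) A)" for A
    using N unfolding lincomb_val_def sum_list_sum_nth by (simp add: sum_subtractf atLeast0LessThan)
  ultimately show ?thesis
    by (simp add: diff_op_sum null_on_bounded_def)
qed

theorem lemma1:
  fixes fs gs :: "(real \<times> (real^'n::finite) \<times> (real^'n) list) list" and P :: "(real^'n) set"
  assumes "\<forall>t \<in> set fs. valid_cone_term t"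
      and "\<forall>t \<in> set gs. valid_cone_term t"
      and "fourier_equiv fs gs"
      and "pointy_cone P"
      and "lincomb_support fs \<subseteq> P"
      and "lincomb_support gs \<subseteq> P"
  shows "\<forall>A \<in> sets borel. bounded A \<longrightarrow> lincomb_val fs A = lincomb_val gs A"
proof -
  let ?h = "\<lambda>A. lincomb_val fs A - lincomb_val gs A"
  have "null_far_from P 1 ?h"
    using null_far_from_support[OF assms(1,5) zero_less_one] null_far_from_support[OF assms(2,6) zero_less_one]
    by (simp add: null_far_from_def)
  moreover have "\<forall>i \<in> weight_index gs. weight gs i \<noteq> 0"
    using weight_nonzero[OF assms(2)] by blast
  ultimately have "null_on_bounded ?h"
    using null_on_bounded_of_diff_op[OF assms(4) finite_weight_index _ _ fourier_equiv_diff_op[OF assms(1-3)]]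
    by blast
  then show ?thesis
    unfolding null_on_bounded_def by simp
qed

end
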